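(* Let $\mathcal{X},\mathcal{Y}$ be finite, $P_{\bar X}$ an $m$-type on $\mathcal{X}$ (for some positive integer $m$), $P_{Y|X}$ a channel, $P_{\bar XY}=P_{\bar X}P_{Y|X}$, and let $R>I(P_{\bar X},P_{Y|X})$. For a channel $Q_{Y|X}$ let $Q_Y=\sum_xP_{\bar X}(x)Q_{Y|X}(\cdot|x)$. Then \[ \min_{Q_{Y|X}}\Big\{D(P_{\bar X}Q_{Y|X}\|P_{\bar XY})+\tfrac12\big[R-D(P_{\bar X}Q_{Y|X}\|P_{\bar X}Q_Y)\big]_+\Big\}=\max_{\lambda\in[1,2]}\Big\{\frac{\lambda-1}{\lambda}\big(R-I^{\mathsf{c}}_\lambda(P_{\bar X},P_{Y|X})\big)\Big\}, \] where the minimum is over all channels from $\mathcal{X}$ to $\mathcal{Y}$ and $[f]_+=\max\{0,f\}$.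
   Context: An $m$-type is a distribution with all probabilities in $\{0,1/m,\dots,1\}$. $D$ is relative entropy, $I$ mutual information. Csiszár's $\alpha$-mutual information: $I^{\mathsf{c}}_\lambda(P_X,P_{Y|X})=\min_{S_Y}\sum_xP_X(x)D_\lambda(P_{Y|X}(\cdot|x)\|S_Y)$, with the minimum over distributions $S_Y$ on $\mathcal{Y}$ and $D_\lambda(P\|Q)=\frac1{\lambda-1}\log\sum_yP(y)^\lambda Q(y)^{1-\lambda}$ the Rényi divergence ($D_1$ = relative entropy). *)

theory Defs
  imports "HOL-Analysis.Analysis"
begin

text \<open>Distributions on a finite type are represented by their probability mass
  functions. Logarithms are natural logarithms.\<close>

definition is_dist :: "('a::finite \<Rightarrow> real) \<Rightarrow> bool" where
  "is_dist P \<longleftrightarrow> (\<forall>a. 0 \<le> P a) \<and> (\<Sum>a\<in>UNIV. P a) = 1"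

definition is_channel :: "('x::finite \<Rightarrow> 'y::finite \<Rightarrow> real) \<Rightarrow> bool" where
  "is_channel W \<longleftrightarrow> (\<forall>x. is_dist (W x))"

definition is_mtype :: "nat \<Rightarrow> ('a::finite \<Rightarrow> real) \<Rightarrow> bool" where
  "is_mtype m P \<longleftrightarrow> is_dist P \<and> (\<forall>a. \<exists>k::nat. k \<le> m \<and> P a = real k / real m)"

definition rel_ent :: "('a::finite \<Rightarrow> real) \<Rightarrow> ('a \<Rightarrow> real) \<Rightarrow> ereal" where
  "rel_ent P Q = (if \<forall>a. P a > 0 \<longrightarrow> Q a > 0
     then ereal (\<Sum>a | P a > 0. P a * ln (P a / Q a)) else \<infinity>)"

text \<open>Renyi divergence of order \<lambda> (\<lambda> > 0); D_1 is relative entropy.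
  Convention: terms with P(y) = 0 contribute 0.\<close>
definition renyi_div :: "real \<Rightarrow> ('a::finite \<Rightarrow> real) \<Rightarrow> ('a \<Rightarrow> real) \<Rightarrow> ereal" where
  "renyi_div l P Q = (if l = 1 then rel_ent P Q else
     (let s = (\<Sum>a | P a > 0. P a powr l * Q a powr (1 - l)) in
      if (l > 1 \<and> \<not> (\<forall>a. P a > 0 \<longrightarrow> Q a > 0)) \<or> s \<le> 0 then \<infinity>
      else ereal (1 / (l - 1) * ln s)))"

definition joint :: "('x::finite \<Rightarrow> real) \<Rightarrow> ('x \<Rightarrow> 'y::finite \<Rightarrow> real) \<Rightarrow> 'x \<times> 'y \<Rightarrow> real" where
  "joint P W = (\<lambda>(x, y). P x * W x y)"

definition out_dist :: "('x::finite \<Rightarrow> real) \<Rightarrow> ('x \<Rightarrow> 'y::finite \<Rightarrow> real) \<Rightarrow> 'y \<Rightarrow> real" where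
  "out_dist P W = (\<lambda>y. \<Sum>x\<in>UNIV. P x * W x y)"

definition prod_dist :: "('x::finite \<Rightarrow> real) \<Rightarrow> ('y::finite \<Rightarrow> real) \<Rightarrow> 'x \<times> 'y \<Rightarrow> real" where
  "prod_dist P Q = (\<lambda>(x, y). P x * Q y)"

definition mutual_info :: "('x::finite \<Rightarrow> real) \<Rightarrow> ('x \<Rightarrow> 'y::finite \<Rightarrow> real) \<Rightarrow> ereal" where
  "mutual_info P W = rel_ent (joint P W) (prod_dist P (out_dist P W))"

text \<open>Csiszar's alpha-mutual information (minimum over output distributions,
  rendered as an infimum).\<close>
definition csiszar_mi :: "real \<Rightarrow> ('x::finite \<Rightarrow> real) \<Rightarrow> ('x \<Rightarrow> 'y::finite \<Rightarrow> real) \<Rightarrow> ereal" where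
  "csiszar_mi l P W = (INF S \<in> {S. is_dist S}. \<Sum>x\<in>UNIV. ereal (P x) * renyi_div l (W x) S)"

end

theory Submission
  imports Defs
begin

text \<open>
  Write \<open>r = (\<lambda>-1)/\<lambda>\<close>. Weak duality: for every channel \<open>Q\<close> and output distribution \<open>S\<close>,
  the Gibbs variational formula for Renyi divergences gives
  \<open>D(Q \<parallel> W | P) - r D(Q \<parallel> S | P) \<ge> -r \<Sum>\<^sub>x P(x) D\<^sub>\<lambda>(W(x) \<parallel> S)\<close>, and the golden formula
  gives \<open>D(Q \<parallel> S | P) \<ge> I(P,Q)\<close>; hence \<open>I\<^sup>c\<^sub>\<lambda> \<ge> I(P,Q) - D(Q \<parallel> W | P)/r\<close>, and since \<open>r \<le> 1/2\<close>
  the dual objective lies below the primal one.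

  Strong duality: on the compact convex set of channels absolutely continuous with respect
  to \<open>W\<close> (elsewhere the primal objective is infinite) the primal objective is the maximum of
  two continuous convex functions, so a separating hyperplane turns its minimiser \<open>Q\<^sub>0\<close> into a
  minimiser of the Lagrangian \<open>D(Q \<parallel> W | P) - r I(P,Q)\<close> for some \<open>r \<in> [0, 1/2]\<close>. When
  \<open>r > 0\<close>, perturbation arguments show that the output distribution of \<open>Q\<^sub>0\<close> attains the
  infimum defining \<open>I\<^sup>c\<^sub>\<lambda>\<close>, which makes the primal value at \<open>Q\<^sub>0\<close> equal to the dual value at \<open>\<lambda>\<close>.
\<close>

definition xlnx :: "real \<Rightarrow> real" where "xlnx u = u * ln u"

lemma diff_le_mult_ln_diff:
  assumes "0 \<le> (a::real)" "0 < c"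
  shows "a - c \<le> a * ln a - a * ln c"
proof (cases "a = 0")
  case False
  hence a: "a > 0" using assms by simp
  have "a * ln (c/a) \<le> a * (c/a - 1)"
    using ln_le_minus_one[of "c/a"] a assms by (simp add: mult_left_mono)
  moreover have "ln (c/a) = ln c - ln a" using a assms by (simp add: ln_div)
  ultimately show ?thesis using a by (simp add: algebra_simps)
qed (use assms in simp)

lemma xlnx_convex_comb:
  assumes "0 \<le> a" "0 \<le> b" "0 \<le> s" "s \<le> 1"
  shows "xlnx ((1-s)*a + s*b) \<le> (1-s) * xlnx a + s * xlnx b"
proof -
  define c where "c = (1-s)*a + s*b"
  show ?thesis
  proof (cases "c = 0")
    case True
    hence "(1-s)*a = 0" "s*b = 0" using assms c_def
      by (smt (verit) mult_nonneg_nonneg)+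
    then show ?thesis using True unfolding xlnx_def c_def by (auto simp: mult.assoc[symmetric])
  next
    case False
    moreover have "0 \<le> c" using assms unfolding c_def by simp
    ultimately have cp: "c > 0" by simp
    have "(1-s)*(a - c) \<le> (1-s)*(a*ln a - a*ln c)"
      using diff_le_mult_ln_diff[OF assms(1) cp] assms by (simp add: mult_left_mono)
    moreover have "s*(b - c) \<le> s*(b*ln b - b*ln c)"
      using diff_le_mult_ln_diff[OF assms(2) cp] assms by (simp add: mult_left_mono)
    moreover have "(1-s)*(a - c) + s*(b-c) = 0" unfolding c_def by (simp add: algebra_simps)
    moreover have "(1-s)*(a*ln a - a*ln c) + s*(b*ln b - b*ln c) = (1-s)*xlnx a + s*xlnx b - xlnx c"
      unfolding xlnx_def c_def by (simp add: algebra_simps)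
    ultimately show ?thesis unfolding c_def by linarith
  qed
qed

lemma xlnx_mult: "0 < s \<Longrightarrow> 0 \<le> b \<Longrightarrow> xlnx (s * b) = s * ln s * b + s * xlnx b"
  by (cases "b = 0") (simp_all add: xlnx_def ln_mult algebra_simps)

lemma continuous_on_xlnx: "continuous_on {0..1} xlnx"
proof (rule continuous_on_IccI)
  have "((\<lambda>x::real. - (ln x / x)) \<longlongrightarrow> 0) at_top"
    using tendsto_minus[OF ln_x_over_x_tendsto_0] by simp
  moreover have "\<forall>\<^sub>F x in at_top. - (ln x / x) = xlnx (inverse x)"
    using eventually_gt_at_top[of "0::real"]
    by eventually_elim (simp add: xlnx_def ln_inverse divide_inverse)
  ultimately have "((\<lambda>x. xlnx (inverse x)) \<longlongrightarrow> 0) at_top"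
    using tendsto_cong by fastforce
  thus "(xlnx \<longlongrightarrow> xlnx 0) (at_right 0)"
    unfolding filterlim_at_right_to_top by (simp add: xlnx_def)
  have "isCont xlnx 1" unfolding xlnx_def by (intro continuous_intros) auto
  thus "(xlnx \<longlongrightarrow> xlnx 1) (at_left 1)"
    by (simp add: isCont_def filterlim_at_split)
  fix x :: real assume "0 < x" "x < 1"
  hence "isCont xlnx x" unfolding xlnx_def by (intro continuous_intros) auto
  thus "xlnx \<midarrow>x\<rightarrow> xlnx x" by (simp add: isCont_def)
qed simp

lemma xlnx_minus_mult_ln_le_chi_square:
  fixes q s :: real
  assumes "0 \<le> q" "0 \<le> s" "0 < q \<Longrightarrow> 0 < s"
  shows "xlnx q - q * ln s \<le> (q - s)\<^sup>2 / s + (q - s)"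
proof (cases "q = 0")
  case True thus ?thesis using assms by (simp add: xlnx_def power2_eq_square)
next
  case False
  hence q: "0 < q" and s: "0 < s" using assms by auto
  have "q * ln (q / s) \<le> q * (q / s - 1)"
    using ln_le_minus_one[of "q/s"] q s by (simp add: mult_left_mono)
  moreover have "q * ln (q / s) = xlnx q - q * ln s" using q s by (simp add: xlnx_def ln_div algebra_simps)
  moreover have "q * (q / s - 1) = (q - s)\<^sup>2 / s + (q - s)" using s
    by (simp add: field_simps power2_eq_square)
  ultimately show ?thesis by simp
qed

lemma sum_mult_ln_ratio_le_ln:
  fixes q u :: "'y \<Rightarrow> real"
  assumes q0: "\<And>y. 0 \<le> q y" and q1: "(\<Sum>y\<in>Y. q y) = 1"
    and u0: "\<And>y. 0 \<le> u y" and qu: "\<And>y. 0 < q y \<Longrightarrow> 0 < u y"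
    and U: "0 < U" "(\<Sum>y\<in>Y. u y) \<le> U"
  shows "(\<Sum>y\<in>Y. q y * ln (u y / q y)) \<le> ln U"
proof -
  have "q y * ln (u y / q y) \<le> u y / U - q y + q y * ln U" for y
  proof (cases "q y = 0")
    case True then show ?thesis using u0[of y] U by simp
  next
    case False
    hence qp: "q y > 0" using q0[of y] by simp
    have up: "u y > 0" using qu[OF qp] .
    have "q y * ln (u y / (q y * U)) \<le> q y * (u y / (q y * U) - 1)"
      using ln_le_minus_one[of "u y / (q y * U)"] qp up U by (simp add: mult_left_mono)
    moreover have "q y * ln (u y / (q y * U)) = q y * ln (u y / q y) - q y * ln U"
      using qp up U by (simp add: ln_div ln_mult algebra_simps)
    moreover have "q y * (u y / (q y * U) - 1) = u y / U - q y" using qp U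
      by (simp add: field_simps)
    ultimately show ?thesis by linarith
  qed
  hence "(\<Sum>y\<in>Y. q y * ln (u y / q y)) \<le> (\<Sum>y\<in>Y. u y / U - q y + q y * ln U)"
    by (rule sum_mono)
  also have "\<dots> = (\<Sum>y\<in>Y. u y) / U - 1 + ln U"
    by (simp add: sum.distrib sum_subtractf sum_divide_distrib[symmetric]
        sum_distrib_right[symmetric] q1)
  also have "\<dots> \<le> ln U" using U by simp
  finally show ?thesis .
qed

lemma mult_ln_tilt_identity:
  fixes l q w s :: real
  assumes "0 < l" "0 \<le> q" "0 < q \<Longrightarrow> 0 < w \<and> 0 < s"
  shows "q * ln (q / w) - ((l-1)/l) * (q * ln (q / s)) = - (1/l) * (q * ln ((w powr l * s powr (1 - l)) / q))"
proof (cases "q = 0")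
  case False
  hence "0 < q" "0 < w" "0 < s" using assms by auto
  hence e: "ln ((w powr l * s powr (1 - l)) / q) = l * ln w + (1 - l) * ln s - ln q"
    "ln (q / w) = ln q - ln w" "ln (q / s) = ln q - ln s"
    by (simp_all add: ln_div ln_mult)
  have "q * ln (q / w) - ((l-1)/l) * (q * ln (q / s)) + (1/l) * (q * ln ((w powr l * s powr (1 - l)) / q))
     = q * ((ln q - ln w) - ((l-1)/l) * (ln q - ln s) + (1/l) * (l * ln w + (1 - l) * ln s - ln q))"
    unfolding e using assms(1) by (simp add: field_simps)
  also have "\<dots> = 0" using assms(1) by (simp add: field_simps)
  finally show ?thesis by simp
qed simp

lemma nonpos_if_le_small_multiples:
  fixes a b :: real
  assumes "\<And>s. 0 < s \<Longrightarrow> s \<le> 1 \<Longrightarrow> a \<le> s * b"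
  shows "a \<le> 0"
proof (rule ccontr)
  assume "\<not> a \<le> 0"
  hence a: "0 < a" by simp
  hence b: "0 < b" using assms[of 1] by simp
  define s where "s = min 1 (a / (2 * b))"
  have "0 < s" "s \<le> 1" using a b by (auto simp: s_def)
  hence "a \<le> s * b" by (rule assms)
  also have "\<dots> \<le> a / (2 * b) * b" using b by (intro mult_right_mono) (auto simp: s_def)
  finally show False using a b by simp
qed

lemma mult_diff_divide_cancel: "r \<noteq> 0 \<Longrightarrow> r * (a - c / r) = r * a - (c::real)"
  by (simp add: right_diff_distrib)

section \<open>A minimax principle for two convex functions\<close>

lemma nonneg_if_le_on_neg_quadrant:
  fixes p q b :: real
  assumes Nin: "\<And>z1 z2. z1 < 0 \<Longrightarrow> z2 < 0 \<Longrightarrow> p * z1 + q * z2 \<le> b"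
  shows "0 \<le> b \<and> 0 \<le> p \<and> 0 \<le> q"
proof (intro conjI)
  have "- b \<le> s * (p + q)" if "0 < s" for s
    using Nin[of "- s" "- s"] that by (simp add: algebra_simps)
  thus "0 \<le> b" using nonpos_if_le_small_multiples[of "- b" "p + q"] by simp
  show "0 \<le> p"
  proof (rule ccontr)
    assume "\<not> 0 \<le> p"
    define M where "M = (\<bar>b\<bar> + \<bar>q\<bar> + 1) / (- p)"
    have "0 < \<bar>b\<bar> + \<bar>q\<bar> + 1" by simp
    hence "0 < M" unfolding M_def using \<open>\<not> 0 \<le> p\<close> by (intro divide_pos_pos) auto
    hence "p * (-M) + q * (-1) \<le> b" by (intro Nin) auto
    moreover have "p * (-M) = \<bar>b\<bar> + \<bar>q\<bar> + 1" unfolding M_def using \<open>\<not> 0 \<le> p\<close> by simp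
    ultimately show False by linarith
  qed
  show "0 \<le> q"
  proof (rule ccontr)
    assume "\<not> 0 \<le> q"
    define M where "M = (\<bar>b\<bar> + \<bar>p\<bar> + 1) / (- q)"
    have "0 < \<bar>b\<bar> + \<bar>p\<bar> + 1" by simp
    hence "0 < M" unfolding M_def using \<open>\<not> 0 \<le> q\<close> by (intro divide_pos_pos) auto
    hence "p * (-1) + q * (-M) \<le> b" by (intro Nin) auto
    moreover have "q * (-M) = \<bar>b\<bar> + \<bar>p\<bar> + 1" unfolding M_def using \<open>\<not> 0 \<le> q\<close> by simp
    ultimately show False by linarith
  qed
qed

text \<open>Separate the convex set of points lying above some \<open>(A q - v, B q - v)\<close> from the open
  negative quadrant; the normal of the separating line gives the weight \<open>t\<close>.\<close>

lemma convex_comb_ge_if_max_ge: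
  fixes A B :: "'q \<Rightarrow> real"
  assumes conv: "convex {z::real \<times> real. \<exists>q\<in>K. A q \<le> fst z \<and> B q \<le> snd z}"
    and "K \<noteq> {}" and max: "\<And>q. q \<in> K \<Longrightarrow> v \<le> max (A q) (B q)"
  shows "\<exists>t\<in>{0..1}. \<forall>q\<in>K. v \<le> (1-t) * A q + t * B q"
proof -
  define C where "C = {z::real \<times> real. \<exists>q\<in>K. A q - v \<le> fst z \<and> B q - v \<le> snd z}"
  have "C = (+) (- v, - v) ` {z. \<exists>q\<in>K. A q \<le> fst z \<and> B q \<le> snd z}"
    unfolding C_def by (force simp: image_iff algebra_simps intro: exI[of _ "z + (v, v)" for z])
  hence conv: "convex C" using conv by (simp add: convex_translation)
  define N where "N = {z::real \<times> real. fst z < 0 \<and> snd z < 0}"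
  have "N = {z. inner (1::real, 0::real) z < 0} \<inter> {z. inner (0::real, 1::real) z < 0}"
    by (auto simp: N_def inner_prod_def)
  hence "convex N" by (simp add: convex_Int convex_halfspace_lt)
  moreover have "C \<noteq> {}" using \<open>K \<noteq> {}\<close> by (force simp: C_def)
  moreover have "(-1, -1) \<in> N" by (simp add: N_def)
  hence "N \<noteq> {}" by blast
  moreover have "N \<inter> C = {}"
  proof (rule ccontr)
    assume "N \<inter> C \<noteq> {}"
    then obtain z q where "fst z < 0" "snd z < 0" "q \<in> K" "A q - v \<le> fst z" "B q - v \<le> snd z"
      unfolding N_def C_def by blast
    thus False using max[of q] by linarith
  qed
  ultimately obtain a b where "a \<noteq> 0" and aN: "\<forall>z\<in>N. inner a z \<le> b" and aC: "\<forall>z\<in>C. b \<le> inner a z"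
    using separating_hyperplane_sets[OF _ conv] by metis
  obtain p q where pq: "a = (p, q)" by (cases a)
  have Nin: "p * z1 + q * z2 \<le> b" if "z1 < 0" "z2 < 0" for z1 z2
    using aN[rule_format, of "(z1,z2)"] that pq by (simp add: N_def inner_Pair)
  have b0: "0 \<le> b" and p0: "0 \<le> p" and q0: "0 \<le> q"
    using nonneg_if_le_on_neg_quadrant[OF Nin] by auto
  have pq0: "0 < p + q" using \<open>a \<noteq> 0\<close> pq p0 q0 by (auto simp: zero_prod_def)
  have "v \<le> (1 - q / (p + q)) * A r + q / (p + q) * B r" if r: "r \<in> K" for r
  proof -
    have "b \<le> p * (A r - v) + q * (B r - v)" using aC r pq by (force simp: C_def inner_Pair)
    hence "0 \<le> (p * (A r - v) + q * (B r - v)) / (p + q)" using b0 pq0 by simp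
    also have "\<dots> = (p * A r + q * B r - (p + q) * v) / (p + q)"
      by (simp add: algebra_simps)
    also have "\<dots> = p / (p + q) * A r + q / (p + q) * B r - v"
      using pq0 by (simp add: diff_divide_distrib add_divide_distrib)
    also have "p / (p + q) = 1 - q / (p + q)" using pq0 by (simp add: field_simps)
    finally show ?thesis by simp
  qed
  moreover have "q / (p + q) \<in> {0..1}" using p0 q0 pq0 by auto
  ultimately show ?thesis by blast
qed

lemma convex_dominated_set_if_mix_convex:
  fixes A B :: "'q \<Rightarrow> real" and mx :: "real \<Rightarrow> 'q \<Rightarrow> 'q \<Rightarrow> 'q"
  assumes "\<And>q1 q2 s. q1 \<in> K \<Longrightarrow> q2 \<in> K \<Longrightarrow> 0 \<le> s \<Longrightarrow> s \<le> 1 \<Longrightarrow> mx s q1 q2 \<in> K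
      \<and> A (mx s q1 q2) \<le> (1-s) * A q1 + s * A q2 \<and> B (mx s q1 q2) \<le> (1-s) * B q1 + s * B q2"
  shows "convex {z::real \<times> real. \<exists>q\<in>K. A q \<le> fst z \<and> B q \<le> snd z}"
proof (rule convexI)
  fix z1 z2 :: "real \<times> real" and u s :: real
  assume z1: "z1 \<in> {z. \<exists>q\<in>K. A q \<le> fst z \<and> B q \<le> snd z}"
    and z2: "z2 \<in> {z. \<exists>q\<in>K. A q \<le> fst z \<and> B q \<le> snd z}"
    and "0 \<le> u" "0 \<le> s" "u + s = 1"
  hence u: "u = 1 - s" and s: "0 \<le> s" "s \<le> 1" by auto
  obtain q1 where q1: "q1 \<in> K" "A q1 \<le> fst z1" "B q1 \<le> snd z1" using z1 by blast
  obtain q2 where q2: "q2 \<in> K" "A q2 \<le> fst z2" "B q2 \<le> snd z2" using z2 by blast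
  have "(1-s) * A q1 + s * A q2 \<le> (1-s) * fst z1 + s * fst z2"
    "(1-s) * B q1 + s * B q2 \<le> (1-s) * snd z1 + s * snd z2"
    using q1 q2 s by (auto intro!: add_mono mult_left_mono)
  thus "u *\<^sub>R z1 + s *\<^sub>R z2 \<in> {z. \<exists>q\<in>K. A q \<le> fst z \<and> B q \<le> snd z}"
    using assms[OF q1(1) q2(1) s] unfolding u by force
qed

lemma is_dist_nonneg: "is_dist P \<Longrightarrow> 0 \<le> P a"
  by (simp add: is_dist_def)

lemma is_dist_sum: "is_dist P \<Longrightarrow> (\<Sum>a\<in>UNIV. P a) = 1"
  by (simp add: is_dist_def)

lemma is_channel_nonneg: "is_channel Q \<Longrightarrow> 0 \<le> Q x y"
  by (simp add: is_channel_def is_dist_def)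

lemma is_channel_sum: "is_channel Q \<Longrightarrow> (\<Sum>y\<in>UNIV. Q x y) = 1"
  by (simp add: is_channel_def is_dist_def)

lemma is_channel_le_1:
  assumes "is_channel Q" shows "Q x y \<le> 1"
proof -
  have "Q x y \<le> (\<Sum>y\<in>UNIV. Q x y)"
    by (rule member_le_sum) (auto intro: is_channel_nonneg[OF assms])
  thus ?thesis using is_channel_sum[OF assms] by simp
qed

lemma gibbs_inequality:
  fixes q r :: "'y::finite \<Rightarrow> real"
  assumes "is_dist q" "is_dist r" "\<And>y. 0 < q y \<Longrightarrow> 0 < r y"
  shows "0 \<le> (\<Sum>y\<in>UNIV. q y * ln (q y / r y))"
proof -
  have "(\<Sum>y\<in>UNIV. q y * ln (r y / q y)) \<le> ln 1"
    by (rule sum_mult_ln_ratio_le_ln) (use assms in \<open>auto simp: is_dist_def\<close>)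
  moreover have "q y * ln (q y / r y) = - (q y * ln (r y / q y))" for y
  proof (cases "q y = 0")
    case False
    hence "0 < q y" "0 < r y" using assms by (auto simp: is_dist_def less_le)
    thus ?thesis by (simp add: ln_div algebra_simps)
  qed simp
  ultimately show ?thesis by (simp add: sum_negf)
qed

definition cond_rel_ent ::
  "('x::finite \<Rightarrow> real) \<Rightarrow> ('x \<Rightarrow> 'y::finite \<Rightarrow> real) \<Rightarrow> ('x \<Rightarrow> 'y \<Rightarrow> real) \<Rightarrow> real" where
  "cond_rel_ent P Q V = (\<Sum>x\<in>UNIV. P x * (\<Sum>y\<in>UNIV. Q x y * ln (Q x y / V x y)))"

definition mutual_info_real :: "('x::finite \<Rightarrow> real) \<Rightarrow> ('x \<Rightarrow> 'y::finite \<Rightarrow> real) \<Rightarrow> real" where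
  "mutual_info_real P Q = cond_rel_ent P Q (\<lambda>x. out_dist P Q)"

lemma out_dist_nonneg:
  assumes "is_dist P" "is_channel Q" shows "0 \<le> out_dist P Q y"
  unfolding out_dist_def using is_dist_nonneg[OF assms(1)] is_channel_nonneg[OF assms(2)]
  by (auto intro!: sum_nonneg)

lemma out_dist_pos:
  assumes P: "is_dist P" and Q: "is_channel Q" and "0 < P x" "0 < Q x y"
  shows "0 < out_dist P Q y"
proof -
  have "P x * Q x y \<le> (\<Sum>x'\<in>UNIV. P x' * Q x' y)"
    by (rule member_le_sum) (auto intro: mult_nonneg_nonneg is_dist_nonneg[OF P] is_channel_nonneg[OF Q])
  moreover have "0 < P x * Q x y" using assms by simp
  ultimately show ?thesis by (simp add: out_dist_def)
qed

lemma out_dist_pos_imp_ex: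
  assumes P: "is_dist P" and Q: "is_channel Q" and "0 < out_dist P Q y"
  shows "\<exists>x. 0 < P x \<and> 0 < Q x y"
proof (rule ccontr)
  assume "\<not> ?thesis"
  hence h: "P x * Q x y = 0" for x using is_dist_nonneg[OF P, of x] is_channel_nonneg[OF Q, of x y]
    by (metis less_eq_real_def mult_eq_0_iff)
  have "out_dist P Q y = 0" by (simp add: out_dist_def h)
  thus False using assms by simp
qed

lemma is_dist_out_dist:
  assumes P: "is_dist P" and Q: "is_channel Q" shows "is_dist (out_dist P Q)"
proof -
  have "(\<Sum>y\<in>UNIV. out_dist P Q y) = (\<Sum>x\<in>UNIV. P x * (\<Sum>y\<in>UNIV. Q x y))"
    unfolding out_dist_def sum_distrib_left by (rule sum.swap)
  also have "\<dots> = 1" using is_channel_sum[OF Q] is_dist_sum[OF P] by simp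
  finally show ?thesis using out_dist_nonneg[OF P Q] by (simp add: is_dist_def)
qed

lemma out_dist_le_1:
  assumes P: "is_dist P" and Q: "is_channel Q" shows "out_dist P Q y \<le> 1"
proof -
  have "out_dist P Q y \<le> (\<Sum>y\<in>UNIV. out_dist P Q y)"
    by (rule member_le_sum) (auto intro: out_dist_nonneg[OF P Q])
  thus ?thesis using is_dist_out_dist[OF P Q] by (simp add: is_dist_def)
qed

lemma sum_cond_eq_sum_out_dist:
  "(\<Sum>x\<in>UNIV. P x * (\<Sum>y\<in>UNIV. Q x y * g y)) = (\<Sum>y\<in>UNIV. out_dist P Q y * g y)"
  unfolding out_dist_def sum_distrib_left sum_distrib_right
  by (subst sum.swap) (simp add: mult.assoc)

lemma rel_ent_joint_eq_cond_rel_ent: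
  fixes P :: "'x::finite \<Rightarrow> real" and Q V :: "'x \<Rightarrow> 'y::finite \<Rightarrow> real"
  assumes P: "is_dist P" and Q: "is_channel Q"
    and supp: "\<And>x y. 0 < P x \<Longrightarrow> 0 < Q x y \<Longrightarrow> 0 < V x y"
  shows "rel_ent (joint P Q) (joint P V) = ereal (cond_rel_ent P Q V)"
proof -
  have joint_nonneg: "0 \<le> joint P Q a" for a
    using is_dist_nonneg[OF P] is_channel_nonneg[OF Q] by (cases a) (simp add: joint_def)
  have pos: "0 < P x \<and> 0 < Q x y" if "0 < P x * Q x y" for x y
    using that is_dist_nonneg[OF P, of x] is_channel_nonneg[OF Q, of x y]
    by (metis less_eq_real_def mult_eq_0_iff)
  have abs_cont: "\<forall>a. joint P Q a > 0 \<longrightarrow> joint P V a > 0"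
  proof (intro allI impI)
    fix a assume "joint P Q a > 0"
    then obtain x y where a: "a = (x,y)" and xy: "0 < P x * Q x y"
      by (cases a) (simp add: joint_def)
    hence "0 < P x * V x y" using pos[OF xy] supp by simp
    thus "joint P V a > 0" using a by (simp add: joint_def)
  qed
  have "(\<Sum>a | joint P Q a > 0. joint P Q a * ln (joint P Q a / joint P V a))
      = (\<Sum>a\<in>UNIV. joint P Q a * ln (joint P Q a / joint P V a))"
  proof (rule sum.mono_neutral_left)
    show "\<forall>i\<in>UNIV - {a. 0 < joint P Q a}. joint P Q i * ln (joint P Q i / joint P V i) = 0"
      using joint_nonneg by (metis DiffD2 less_eq_real_def mem_Collect_eq mult_eq_0_iff)
  qed auto
  also have "\<dots> = (\<Sum>(x,y)\<in>UNIV \<times> UNIV. joint P Q (x,y) * ln (joint P Q (x,y) / joint P V (x,y)))"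
    by (rule sum.cong) (auto simp: UNIV_Times_UNIV)
  also have "\<dots> = (\<Sum>x\<in>UNIV. \<Sum>y\<in>UNIV. joint P Q (x,y) * ln (joint P Q (x,y) / joint P V (x,y)))"
    by (rule sum.cartesian_product[symmetric])
  also have "\<dots> = cond_rel_ent P Q V"
    unfolding cond_rel_ent_def sum_distrib_left
    by (intro sum.cong refl) (simp add: joint_def)
  finally show ?thesis unfolding rel_ent_def if_P[OF abs_cont] by simp
qed

lemma rel_ent_prod_dist_eq_cond_rel_ent:
  fixes P :: "'x::finite \<Rightarrow> real" and Q :: "'x \<Rightarrow> 'y::finite \<Rightarrow> real" and S :: "'y \<Rightarrow> real"
  assumes "is_dist P" "is_channel Q" "\<And>x y. 0 < P x \<Longrightarrow> 0 < Q x y \<Longrightarrow> 0 < S y"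
  shows "rel_ent (joint P Q) (prod_dist P S) = ereal (cond_rel_ent P Q (\<lambda>x. S))"
proof -
  have "prod_dist P S = joint P (\<lambda>x. S)" by (simp add: prod_dist_def joint_def)
  thus ?thesis using rel_ent_joint_eq_cond_rel_ent[OF assms(1,2), of "\<lambda>x. S"] assms(3) by simp
qed

lemma rel_ent_joint_infinite:
  assumes "0 < P x" "0 < Q x y" "V x y = 0"
  shows "rel_ent (joint P Q) (joint P V) = \<infinity>"
proof -
  have "joint P Q (x,y) > 0" "\<not> joint P V (x,y) > 0" using assms by (auto simp: joint_def)
  thus ?thesis unfolding rel_ent_def by auto
qed

lemma mutual_info_eq_mutual_info_real:
  assumes "is_dist P" "is_channel Q"
  shows "rel_ent (joint P Q) (prod_dist P (out_dist P Q)) = ereal (mutual_info_real P Q)"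
  unfolding mutual_info_real_def
  by (rule rel_ent_prod_dist_eq_cond_rel_ent[OF assms]) (rule out_dist_pos[OF assms])

definition neg_cond_entropy :: "('x::finite \<Rightarrow> real) \<Rightarrow> ('x \<Rightarrow> 'y::finite \<Rightarrow> real) \<Rightarrow> real" where
  "neg_cond_entropy P Q = (\<Sum>x\<in>UNIV. P x * (\<Sum>y\<in>UNIV. xlnx (Q x y)))"

definition cond_log_lik ::
  "('x::finite \<Rightarrow> real) \<Rightarrow> ('x \<Rightarrow> 'y::finite \<Rightarrow> real) \<Rightarrow> ('x \<Rightarrow> 'y \<Rightarrow> real) \<Rightarrow> real" where
  "cond_log_lik P V Q = (\<Sum>x\<in>UNIV. P x * (\<Sum>y\<in>UNIV. Q x y * ln (V x y)))"

definition neg_out_entropy :: "('x::finite \<Rightarrow> real) \<Rightarrow> ('x \<Rightarrow> 'y::finite \<Rightarrow> real) \<Rightarrow> real" where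
  "neg_out_entropy P Q = (\<Sum>y\<in>UNIV. xlnx (out_dist P Q y))"

definition out_log_lik :: "('x::finite \<Rightarrow> real) \<Rightarrow> ('y::finite \<Rightarrow> real) \<Rightarrow> ('x \<Rightarrow> 'y \<Rightarrow> real) \<Rightarrow> real" where
  "out_log_lik P S Q = (\<Sum>y\<in>UNIV. out_dist P Q y * ln (S y))"

lemma cond_rel_ent_eq_neg_cond_entropy_minus:
  fixes P :: "'x::finite \<Rightarrow> real" and Q V :: "'x \<Rightarrow> 'y::finite \<Rightarrow> real"
  assumes "is_dist P" "is_channel Q" "\<And>x y. 0 < P x \<Longrightarrow> 0 < Q x y \<Longrightarrow> 0 < V x y"
  shows "cond_rel_ent P Q V = neg_cond_entropy P Q - cond_log_lik P V Q"
proof -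
  have "P x * (Q x y * ln (Q x y / V x y)) = P x * (xlnx (Q x y) - Q x y * ln (V x y))" for x y
  proof (cases "0 < P x \<and> 0 < Q x y")
    case True
    hence "0 < V x y" using assms(3) by blast
    with True show ?thesis by (simp add: xlnx_def ln_div algebra_simps)
  next
    case False
    hence "P x = 0 \<or> Q x y = 0"
      using is_dist_nonneg[OF assms(1), of x] is_channel_nonneg[OF assms(2), of x y] by auto
    thus ?thesis by (auto simp: xlnx_def)
  qed
  thus ?thesis
    unfolding cond_rel_ent_def neg_cond_entropy_def cond_log_lik_def sum_distrib_left
    by (simp add: sum_subtractf right_diff_distrib)
qed

lemma cond_log_lik_const: "cond_log_lik P (\<lambda>x. S) Q = out_log_lik P S Q"
  unfolding cond_log_lik_def out_log_lik_def by (rule sum_cond_eq_sum_out_dist)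

lemma cond_rel_ent_const_eq:
  assumes "is_dist P" "is_channel Q" "\<And>x y. 0 < P x \<Longrightarrow> 0 < Q x y \<Longrightarrow> 0 < S y"
  shows "cond_rel_ent P Q (\<lambda>x. S) = neg_cond_entropy P Q - out_log_lik P S Q"
  using cond_rel_ent_eq_neg_cond_entropy_minus[OF assms] by (simp add: cond_log_lik_const)

lemma mutual_info_real_eq:
  assumes "is_dist P" "is_channel Q"
  shows "mutual_info_real P Q = neg_cond_entropy P Q - neg_out_entropy P Q"
proof -
  have "out_log_lik P (out_dist P Q) Q = neg_out_entropy P Q"
    by (simp add: out_log_lik_def neg_out_entropy_def xlnx_def)
  thus ?thesis unfolding mutual_info_real_def
    by (subst cond_rel_ent_const_eq[OF assms]) (auto intro: out_dist_pos[OF assms])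
qed

lemma neg_out_entropy_minus_out_log_lik_eq:
  assumes "is_dist P" "is_channel Q" "\<And>y. 0 < out_dist P Q y \<Longrightarrow> 0 < S y"
  shows "neg_out_entropy P Q - out_log_lik P S Q
    = (\<Sum>y\<in>UNIV. out_dist P Q y * ln (out_dist P Q y / S y))"
proof -
  have "xlnx (out_dist P Q y) - out_dist P Q y * ln (S y) = out_dist P Q y * ln (out_dist P Q y / S y)"
    for y
  proof (cases "out_dist P Q y = 0")
    case False
    hence "0 < out_dist P Q y" using out_dist_nonneg[OF assms(1,2), of y] by simp
    with assms(3)[OF this] show ?thesis by (simp add: xlnx_def ln_div algebra_simps)
  qed (simp add: xlnx_def)
  thus ?thesis unfolding neg_out_entropy_def out_log_lik_def by (simp add: sum_subtractf[symmetric])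
qed

text \<open>The golden formula \<open>I(P,Q) = D(Q \<parallel> S | P) - D(Q\<^sub>Y \<parallel> S)\<close>, for every output distribution \<open>S\<close>.\<close>

lemma mutual_info_real_le_cond_rel_ent_const:
  assumes P: "is_dist P" and Q: "is_channel Q" and S: "is_dist S"
    and supp: "\<And>y. 0 < out_dist P Q y \<Longrightarrow> 0 < S y"
  shows "mutual_info_real P Q \<le> cond_rel_ent P Q (\<lambda>x. S)"
proof -
  have "cond_rel_ent P Q (\<lambda>x. S) - mutual_info_real P Q
      = (\<Sum>y\<in>UNIV. out_dist P Q y * ln (out_dist P Q y / S y))"
    using cond_rel_ent_const_eq[OF P Q] supp out_dist_pos[OF P Q] mutual_info_real_eq[OF P Q]
      neg_out_entropy_minus_out_log_lik_eq[OF P Q supp] by simp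
  moreover have "0 \<le> (\<Sum>y\<in>UNIV. out_dist P Q y * ln (out_dist P Q y / S y))"
    by (rule gibbs_inequality[OF is_dist_out_dist[OF P Q] S supp])
  ultimately show ?thesis by simp
qed

lemma neg_out_entropy_minus_out_log_lik_le_chi_square:
  assumes P: "is_dist P" and Q: "is_channel Q" and S: "is_dist S"
    and supp: "\<And>y. 0 < out_dist P Q y \<Longrightarrow> 0 < S y"
  shows "neg_out_entropy P Q - out_log_lik P S Q \<le> (\<Sum>y\<in>UNIV. (out_dist P Q y - S y)\<^sup>2 / S y)"
proof -
  have "neg_out_entropy P Q - out_log_lik P S Q
      = (\<Sum>y\<in>UNIV. xlnx (out_dist P Q y) - out_dist P Q y * ln (S y))"
    by (simp add: neg_out_entropy_def out_log_lik_def sum_subtractf)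
  also have "\<dots> \<le> (\<Sum>y\<in>UNIV. (out_dist P Q y - S y)\<^sup>2 / S y + (out_dist P Q y - S y))"
    by (intro sum_mono xlnx_minus_mult_ln_le_chi_square)
      (use out_dist_nonneg[OF P Q] is_dist_nonneg[OF S] supp in auto)
  also have "\<dots> = (\<Sum>y\<in>UNIV. (out_dist P Q y - S y)\<^sup>2 / S y)"
    using is_dist_sum[OF is_dist_out_dist[OF P Q]] is_dist_sum[OF S]
    by (simp add: sum.distrib sum_subtractf)
  finally show ?thesis .
qed

definition mix :: "real \<Rightarrow> ('x \<Rightarrow> 'y \<Rightarrow> real) \<Rightarrow> ('x \<Rightarrow> 'y \<Rightarrow> real) \<Rightarrow> 'x \<Rightarrow> 'y \<Rightarrow> real" where
  "mix s Q1 Q2 = (\<lambda>x y. (1 - s) * Q1 x y + s * Q2 x y)"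

lemma is_channel_mix:
  assumes "is_channel Q1" "is_channel Q2" "0 \<le> s" "s \<le> 1"
  shows "is_channel (mix s Q1 Q2)"
  using is_channel_nonneg[OF assms(1)] is_channel_nonneg[OF assms(2)]
    is_channel_sum[OF assms(1)] is_channel_sum[OF assms(2)] assms(3,4)
  by (auto simp: is_channel_def is_dist_def mix_def sum.distrib sum_distrib_left[symmetric])

lemma out_dist_mix: "out_dist P (mix s Q1 Q2) y = (1 - s) * out_dist P Q1 y + s * out_dist P Q2 y"
  unfolding out_dist_def mix_def sum_distrib_left sum.distrib[symmetric]
  by (rule sum.cong) (auto simp: algebra_simps)

lemma cond_log_lik_mix:
  "cond_log_lik P V (mix s Q1 Q2) = (1-s) * cond_log_lik P V Q1 + s * cond_log_lik P V Q2"
  unfolding cond_log_lik_def mix_def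
  by (simp add: distrib_left distrib_right sum.distrib sum_distrib_left mult_ac)

lemma out_log_lik_mix:
  "out_log_lik P S (mix s Q1 Q2) = (1-s) * out_log_lik P S Q1 + s * out_log_lik P S Q2"
  unfolding out_log_lik_def out_dist_mix sum_distrib_left sum.distrib[symmetric]
  by (rule sum.cong) (simp_all add: algebra_simps)

lemma neg_cond_entropy_mix_le:
  assumes "is_dist P" "is_channel Q1" "is_channel Q2" "0 \<le> s" "s \<le> 1"
  shows "neg_cond_entropy P (mix s Q1 Q2) \<le> (1-s) * neg_cond_entropy P Q1 + s * neg_cond_entropy P Q2"
proof -
  have "neg_cond_entropy P (mix s Q1 Q2)
      \<le> (\<Sum>x\<in>UNIV. P x * (\<Sum>y\<in>UNIV. (1-s) * xlnx (Q1 x y) + s * xlnx (Q2 x y)))"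
    unfolding neg_cond_entropy_def mix_def
    by (intro sum_mono mult_left_mono xlnx_convex_comb)
      (use assms is_channel_nonneg is_dist_nonneg in auto)
  also have "\<dots> = (1-s) * neg_cond_entropy P Q1 + s * neg_cond_entropy P Q2"
    unfolding neg_cond_entropy_def
    by (simp add: distrib_left sum.distrib sum_distrib_left mult_ac)
  finally show ?thesis .
qed

lemma neg_out_entropy_mix_le_at_zero:
  assumes P: "is_dist P" and "is_channel Q1" "is_channel Q2" "0 < s" "s \<le> 1"
    and y: "out_dist P Q1 y = 0"
  shows "neg_out_entropy P (mix s Q1 Q2) \<le> (1-s) * neg_out_entropy P Q1 + s * neg_out_entropy P Q2
     + s * ln s * out_dist P Q2 y"
proof -
  have "xlnx (out_dist P (mix s Q1 Q2) z) \<le> (1-s) * xlnx (out_dist P Q1 z) + s * xlnx (out_dist P Q2 z)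
      + (if z = y then s * ln s * out_dist P Q2 y else 0)" for z
    using xlnx_convex_comb[of "out_dist P Q1 z" "out_dist P Q2 z" s] xlnx_mult[of s "out_dist P Q2 y"]
      assms out_dist_nonneg[OF P] unfolding out_dist_mix by (auto simp: xlnx_def)
  hence "neg_out_entropy P (mix s Q1 Q2) \<le> (\<Sum>z\<in>UNIV. (1-s) * xlnx (out_dist P Q1 z)
      + s * xlnx (out_dist P Q2 z) + (if z = y then s * ln s * out_dist P Q2 y else 0))"
    unfolding neg_out_entropy_def by (rule sum_mono)
  thus ?thesis unfolding neg_out_entropy_def sum.distrib sum_distrib_left by simp
qed

lemma neg_out_entropy_mix_le:
  assumes "is_dist P" "is_channel Q1" "is_channel Q2" "0 \<le> s" "s \<le> 1"
  shows "neg_out_entropy P (mix s Q1 Q2) \<le> (1-s) * neg_out_entropy P Q1 + s * neg_out_entropy P Q2"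
proof -
  have "neg_out_entropy P (mix s Q1 Q2)
      \<le> (\<Sum>y\<in>UNIV. (1-s) * xlnx (out_dist P Q1 y) + s * xlnx (out_dist P Q2 y))"
    unfolding neg_out_entropy_def out_dist_mix
    by (intro sum_mono xlnx_convex_comb) (use assms out_dist_nonneg in auto)
  thus ?thesis unfolding neg_out_entropy_def sum.distrib sum_distrib_left .
qed

definition abs_cont_channels ::
  "('x::finite \<Rightarrow> real) \<Rightarrow> ('x \<Rightarrow> 'y::finite \<Rightarrow> real) \<Rightarrow> ('x \<Rightarrow> 'y \<Rightarrow> real) set" where
  "abs_cont_channels P W = {Q. is_channel Q \<and> (\<forall>x y. 0 < P x \<longrightarrow> W x y = 0 \<longrightarrow> Q x y = 0)}"

lemma continuous_on_coordinate: "continuous_on S (\<lambda>Q::'x \<Rightarrow> 'y \<Rightarrow> real. Q x y)"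
proof -
  have "continuous_on UNIV ((\<lambda>q::'y \<Rightarrow> real. q y) \<circ> (\<lambda>Q::'x \<Rightarrow> 'y \<Rightarrow> real. Q x))"
    by (intro continuous_on_compose continuous_on_product_coordinates
        continuous_on_subset[OF continuous_on_product_coordinates]) auto
  thus ?thesis using continuous_on_subset by (fastforce simp: o_def)
qed

lemma compact_unit_box: "compact {Q :: 'x \<Rightarrow> 'y \<Rightarrow> real. \<forall>x y. Q x y \<in> {0..1}}"
proof -
  have "compact (PiE (UNIV::'y set) (\<lambda>_. {0..1::real}))"
    using compactin_PiE[of "\<lambda>_. euclidean" UNIV "\<lambda>_. {0..1::real}"]
    by (simp add: euclidean_product_topology)
  hence "compact (PiE (UNIV::'x set) (\<lambda>_. PiE (UNIV::'y set) (\<lambda>_. {0..1::real})))"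
    using compactin_PiE[of "\<lambda>_. euclidean" UNIV "\<lambda>_. PiE (UNIV::'y set) (\<lambda>_. {0..1::real})"]
    by (simp add: euclidean_product_topology)
  moreover have "PiE (UNIV::'x set) (\<lambda>_. PiE (UNIV::'y set) (\<lambda>_. {0..1::real}))
      = {Q. \<forall>x y. Q x y \<in> {0..1}}"
    by (auto simp: PiE_UNIV_domain Pi_iff)
  ultimately show ?thesis by simp
qed

lemma compact_abs_cont_channels:
  "compact (abs_cont_channels (P :: 'x::finite \<Rightarrow> real) (W :: 'x \<Rightarrow> 'y::finite \<Rightarrow> real))"
proof -
  have "abs_cont_channels P W = {Q :: 'x \<Rightarrow> 'y \<Rightarrow> real. \<forall>x y. Q x y \<in> {0..1}} \<inter>
      {Q. (\<forall>x y. 0 \<le> Q x y) \<and> (\<forall>x. (\<Sum>y\<in>UNIV. Q x y) = 1) \<and> (\<forall>x y. 0 < P x \<and> W x y = 0 \<longrightarrow> Q x y = 0)}"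
    by (auto simp: abs_cont_channels_def is_channel_def is_dist_def
        intro: is_channel_le_1[unfolded is_channel_def is_dist_def])
  also have "compact \<dots>"
    by (intro compact_Int_closed compact_unit_box closed_Collect_conj closed_Collect_all
        closed_Collect_imp closed_Collect_le closed_Collect_eq continuous_on_sum
        continuous_on_coordinate continuous_on_const) (auto simp: open_Collect_const)
  finally show ?thesis .
qed

definition renyi_sum :: "('x \<Rightarrow> 'y::finite \<Rightarrow> real) \<Rightarrow> ('y \<Rightarrow> real) \<Rightarrow> real \<Rightarrow> 'x \<Rightarrow> real" where
  "renyi_sum W S l x = (\<Sum>y\<in>UNIV. W x y powr l * S y powr (1 - l))"

definition avg_renyi ::
  "('x::finite \<Rightarrow> real) \<Rightarrow> ('x \<Rightarrow> 'y::finite \<Rightarrow> real) \<Rightarrow> ('y \<Rightarrow> real) \<Rightarrow> real \<Rightarrow> real" where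
  "avg_renyi P W S l = (\<Sum>x\<in>UNIV. P x * (1 / (l - 1) * ln (renyi_sum W S l x)))"

text \<open>The minimiser of \<open>D(Q \<parallel> W | P) - ((\<lambda>-1)/\<lambda>) D(Q \<parallel> S | P)\<close>; off the support of \<open>P\<close> it
  is irrelevant and set to \<open>W\<close> so that it is a channel.\<close>

definition tilted ::
  "('x::finite \<Rightarrow> real) \<Rightarrow> ('x \<Rightarrow> 'y::finite \<Rightarrow> real) \<Rightarrow> ('y \<Rightarrow> real) \<Rightarrow> real \<Rightarrow> 'x \<Rightarrow> 'y \<Rightarrow> real" where
  "tilted P W S l = (\<lambda>x y. if 0 < P x then W x y powr l * S y powr (1 - l) / renyi_sum W S l x else W x y)"

definition primal_exponent ::
  "('x::finite \<Rightarrow> real) \<Rightarrow> ('x \<Rightarrow> 'y::finite \<Rightarrow> real) \<Rightarrow> real \<Rightarrow> ('x \<Rightarrow> 'y \<Rightarrow> real) \<Rightarrow> ereal" where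
  "primal_exponent P W R Q = rel_ent (joint P Q) (joint P W)
     + ereal (1/2) * max 0 (ereal R - rel_ent (joint P Q) (prod_dist P (out_dist P Q)))"

definition dual_exponent ::
  "('x::finite \<Rightarrow> real) \<Rightarrow> ('x \<Rightarrow> 'y::finite \<Rightarrow> real) \<Rightarrow> real \<Rightarrow> real \<Rightarrow> ereal" where
  "dual_exponent P W R l = ereal ((l - 1) / l) * (ereal R - csiszar_mi l P W)"

locale source_channel =
  fixes P :: "'x::finite \<Rightarrow> real" and W :: "'x \<Rightarrow> 'y::finite \<Rightarrow> real"
  assumes P_dist: "is_dist P" and W_channel: "is_channel W"
begin

lemma P_nonneg: "0 \<le> P x"
  using is_dist_nonneg[OF P_dist] .

lemma abs_cont_channel_is_channel: "Q \<in> abs_cont_channels P W \<Longrightarrow> is_channel Q"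
  by (simp add: abs_cont_channels_def)

lemma abs_cont_channel_supp: "Q \<in> abs_cont_channels P W \<Longrightarrow> 0 < P x \<Longrightarrow> 0 < Q x y \<Longrightarrow> 0 < W x y"
  using is_channel_nonneg[OF W_channel, of x y] by (auto simp: abs_cont_channels_def less_le)

lemma W_mem_abs_cont_channels: "W \<in> abs_cont_channels P W"
  using W_channel by (simp add: abs_cont_channels_def)

lemma mix_mem_abs_cont_channels:
  assumes "Q1 \<in> abs_cont_channels P W" "Q2 \<in> abs_cont_channels P W" "0 \<le> s" "s \<le> 1"
  shows "mix s Q1 Q2 \<in> abs_cont_channels P W"
  using is_channel_mix[OF abs_cont_channel_is_channel[OF assms(1)] abs_cont_channel_is_channel[OF assms(2)]]
    assms by (auto simp: abs_cont_channels_def mix_def)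

lemma cond_rel_ent_self: "cond_rel_ent P W W = 0"
proof -
  have h: "W x y * ln (W x y / W x y) = 0" for x y by (cases "W x y = 0") auto
  show ?thesis unfolding cond_rel_ent_def h by simp
qed

lemma cond_rel_ent_nonneg:
  assumes Q: "Q \<in> abs_cont_channels P W" shows "0 \<le> cond_rel_ent P Q W"
  unfolding cond_rel_ent_def
proof (intro sum_nonneg)
  fix x
  show "0 \<le> P x * (\<Sum>y\<in>UNIV. Q x y * ln (Q x y / W x y))"
  proof (cases "0 < P x")
    case True
    have "0 \<le> (\<Sum>y\<in>UNIV. Q x y * ln (Q x y / W x y))"
      by (rule gibbs_inequality)
        (use abs_cont_channel_is_channel[OF Q] W_channel abs_cont_channel_supp[OF Q True]
          in \<open>auto simp: is_channel_def\<close>)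
    thus ?thesis using True by simp
  qed (use P_nonneg[of x] in simp)
qed

lemma cond_rel_ent_eq:
  assumes "Q \<in> abs_cont_channels P W"
  shows "cond_rel_ent P Q W = neg_cond_entropy P Q - cond_log_lik P W Q"
  using cond_rel_ent_eq_neg_cond_entropy_minus[OF P_dist abs_cont_channel_is_channel[OF assms]]
    abs_cont_channel_supp[OF assms] by blast

subsection \<open>Gibbs variational formula\<close>

lemma renyi_sum_pos:
  assumes Sp: "\<And>x y. 0 < P x \<Longrightarrow> 0 < W x y \<Longrightarrow> 0 < S y" and x: "0 < P x"
  shows "0 < renyi_sum W S l x"
proof -
  obtain y where wy: "0 < W x y"
    using is_channel_sum[OF W_channel, of x] is_channel_nonneg[OF W_channel, of x]
    by (metis less_eq_real_def sum.neutral zero_neq_one)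
  have "W x y powr l * S y powr (1 - l) \<le> renyi_sum W S l x"
    unfolding renyi_sum_def by (rule member_le_sum) (auto intro: mult_nonneg_nonneg)
  moreover have "0 < W x y powr l * S y powr (1 - l)" using wy Sp[OF x wy] by simp
  ultimately show ?thesis by simp
qed

lemma cond_div_combination_eq:
  assumes Q: "Q \<in> abs_cont_channels P W"
    and Sp: "\<And>x y. 0 < P x \<Longrightarrow> 0 < W x y \<Longrightarrow> 0 < S y" and l: "1 < l" and x: "0 < P x"
  shows "(\<Sum>y\<in>UNIV. Q x y * ln (Q x y / W x y)) - ((l-1)/l) * (\<Sum>y\<in>UNIV. Q x y * ln (Q x y / S y))
    = - (1/l) * (\<Sum>y\<in>UNIV. Q x y * ln (W x y powr l * S y powr (1 - l) / Q x y))"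
proof -
  have "Q x y * ln (Q x y / W x y) - ((l-1)/l) * (Q x y * ln (Q x y / S y))
      = - (1/l) * (Q x y * ln (W x y powr l * S y powr (1 - l) / Q x y))" for y
    by (rule mult_ln_tilt_identity)
      (use l is_channel_nonneg[OF abs_cont_channel_is_channel[OF Q]]
        abs_cont_channel_supp[OF Q x] Sp[OF x] in auto)
  hence "(\<Sum>y\<in>UNIV. Q x y * ln (Q x y / W x y) - ((l-1)/l) * (Q x y * ln (Q x y / S y)))
      = (\<Sum>y\<in>UNIV. - (1/l) * (Q x y * ln (W x y powr l * S y powr (1 - l) / Q x y)))"
    by simp
  thus ?thesis by (simp only: sum_subtractf sum_distrib_left[symmetric])
qed

lemma gibbs_variational_lower:
  assumes Q: "Q \<in> abs_cont_channels P W"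
    and Sp: "\<And>x y. 0 < P x \<Longrightarrow> 0 < W x y \<Longrightarrow> 0 < S y" and l: "1 < l" and x: "0 < P x"
  shows "- (1/l) * ln (renyi_sum W S l x) \<le>
    (\<Sum>y\<in>UNIV. Q x y * ln (Q x y / W x y)) - ((l-1)/l) * (\<Sum>y\<in>UNIV. Q x y * ln (Q x y / S y))"
proof -
  have Qc: "is_channel Q" using abs_cont_channel_is_channel[OF Q] .
  have "(\<Sum>y\<in>UNIV. Q x y * ln (W x y powr l * S y powr (1 - l) / Q x y)) \<le> ln (renyi_sum W S l x)"
  proof (rule sum_mult_ln_ratio_le_ln)
    show "0 < W x y powr l * S y powr (1 - l)" if "0 < Q x y" for y
    proof -
      have "0 < W x y" by (rule abs_cont_channel_supp[OF Q x that])
      with Sp[OF x this] show ?thesis by simp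
    qed
  qed (use is_channel_nonneg[OF Qc] is_channel_sum[OF Qc] renyi_sum_pos[OF Sp x]
      in \<open>auto simp: renyi_sum_def\<close>)
  hence "- (1/l) * ln (renyi_sum W S l x)
      \<le> - (1/l) * (\<Sum>y\<in>UNIV. Q x y * ln (W x y powr l * S y powr (1 - l) / Q x y))"
    by (rule mult_left_mono_neg) (use l in simp)
  also have "\<dots> = (\<Sum>y\<in>UNIV. Q x y * ln (Q x y / W x y)) - ((l-1)/l) * (\<Sum>y\<in>UNIV. Q x y * ln (Q x y / S y))"
    by (rule cond_div_combination_eq[OF Q Sp l x, symmetric])
  finally show ?thesis .
qed

lemma tilted_mem_abs_cont_channels:
  assumes Sp: "\<And>x y. 0 < P x \<Longrightarrow> 0 < W x y \<Longrightarrow> 0 < S y"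
  shows "tilted P W S l \<in> abs_cont_channels P W"
proof -
  have "is_dist (tilted P W S l x)" for x
  proof (cases "0 < P x")
    case True
    have Z: "0 < renyi_sum W S l x" by (rule renyi_sum_pos[OF Sp True])
    hence "(\<Sum>y\<in>UNIV. W x y powr l * S y powr (1 - l) / renyi_sum W S l x) = 1"
      by (simp add: sum_divide_distrib[symmetric] renyi_sum_def)
    thus ?thesis using True Z by (simp add: is_dist_def tilted_def)
  qed (use W_channel in \<open>simp add: is_channel_def tilted_def\<close>)
  thus ?thesis by (simp add: abs_cont_channels_def is_channel_def tilted_def)
qed

lemma gibbs_variational_tilted:
  assumes S0: "\<And>y. 0 \<le> S y" and Sp: "\<And>x y. 0 < P x \<Longrightarrow> 0 < W x y \<Longrightarrow> 0 < S y"
    and l: "1 < l" and x: "0 < P x"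
  defines "T \<equiv> tilted P W S l"
  shows "(\<Sum>y\<in>UNIV. T x y * ln (T x y / W x y)) - ((l-1)/l) * (\<Sum>y\<in>UNIV. T x y * ln (T x y / S y))
    = - (1/l) * ln (renyi_sum W S l x)"
proof -
  have TK: "T \<in> abs_cont_channels P W" unfolding T_def by (rule tilted_mem_abs_cont_channels[OF Sp])
  have Z: "0 < renyi_sum W S l x" by (rule renyi_sum_pos[OF Sp x])
  have h: "T x y * ln (W x y powr l * S y powr (1 - l) / T x y) = T x y * ln (renyi_sum W S l x)" for y
    using Z x S0[of y] by (cases "W x y = 0 \<or> S y = 0") (auto simp: T_def tilted_def)
  have "(\<Sum>y\<in>UNIV. T x y * ln (T x y / W x y)) - ((l-1)/l) * (\<Sum>y\<in>UNIV. T x y * ln (T x y / S y))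
      = - (1/l) * (\<Sum>y\<in>UNIV. T x y * ln (W x y powr l * S y powr (1 - l) / T x y))"
    by (rule cond_div_combination_eq[OF TK Sp l x])
  also have "\<dots> = - (1/l) * ((\<Sum>y\<in>UNIV. T x y) * ln (renyi_sum W S l x))"
    unfolding h by (simp add: sum_distrib_right)
  also have "\<dots> = - (1/l) * ln (renyi_sum W S l x)"
    using is_channel_sum[OF abs_cont_channel_is_channel[OF TK], of x] by simp
  finally show ?thesis .
qed

lemma cond_rel_ent_combination_eq:
  "cond_rel_ent P Q W - r * cond_rel_ent P Q (\<lambda>x. S) = (\<Sum>x\<in>UNIV. P x *
    ((\<Sum>y\<in>UNIV. Q x y * ln (Q x y / W x y)) - r * (\<Sum>y\<in>UNIV. Q x y * ln (Q x y / S y))))"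
  unfolding cond_rel_ent_def by (simp add: sum_subtractf sum_distrib_left right_diff_distrib algebra_simps)

lemma avg_renyi_scaled_eq:
  "1 < l \<Longrightarrow> - ((l-1)/l) * avg_renyi P W S l = (\<Sum>x\<in>UNIV. P x * (- (1/l) * ln (renyi_sum W S l x)))"
  unfolding avg_renyi_def sum_distrib_left by (rule sum.cong) (auto simp: field_simps)

lemma avg_renyi_le_cond_rel_ent_combination:
  assumes Q: "Q \<in> abs_cont_channels P W"
    and Sp: "\<And>x y. 0 < P x \<Longrightarrow> 0 < W x y \<Longrightarrow> 0 < S y" and l: "1 < l"
  shows "- ((l-1)/l) * avg_renyi P W S l \<le> cond_rel_ent P Q W - ((l-1)/l) * cond_rel_ent P Q (\<lambda>x. S)"
  unfolding cond_rel_ent_combination_eq avg_renyi_scaled_eq[OF l]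
proof (rule sum_mono)
  fix x
  show "P x * (- (1/l) * ln (renyi_sum W S l x)) \<le> P x * ((\<Sum>y\<in>UNIV. Q x y * ln (Q x y / W x y))
    - (l-1)/l * (\<Sum>y\<in>UNIV. Q x y * ln (Q x y / S y)))"
  proof (cases "0 < P x")
    case True
    show ?thesis by (rule mult_left_mono[OF gibbs_variational_lower[OF Q Sp l True] P_nonneg])
  qed (use P_nonneg[of x] in simp)
qed

lemma avg_renyi_eq_cond_rel_ent_combination_tilted:
  assumes S0: "\<And>y. 0 \<le> S y"
    and Sp: "\<And>x y. 0 < P x \<Longrightarrow> 0 < W x y \<Longrightarrow> 0 < S y" and l: "1 < l"
  defines "T \<equiv> tilted P W S l"
  shows "cond_rel_ent P T W - ((l-1)/l) * cond_rel_ent P T (\<lambda>x. S) = - ((l-1)/l) * avg_renyi P W S l"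
  unfolding cond_rel_ent_combination_eq avg_renyi_scaled_eq[OF l]
proof (rule sum.cong[OF refl])
  fix x
  show "P x * ((\<Sum>y\<in>UNIV. T x y * ln (T x y / W x y)) - (l-1)/l * (\<Sum>y\<in>UNIV. T x y * ln (T x y / S y)))
    = P x * (- (1/l) * ln (renyi_sum W S l x))"
  proof (cases "0 < P x")
    case True
    show ?thesis using gibbs_variational_tilted[OF S0 Sp l True] unfolding T_def by simp
  qed (use P_nonneg[of x] in simp)
qed

lemma sum_renyi_div_eq_avg_renyi:
  assumes l: "1 < l" and Sp: "\<And>x y. 0 < P x \<Longrightarrow> 0 < W x y \<Longrightarrow> 0 < S y"
  shows "(\<Sum>x\<in>UNIV. ereal (P x) * renyi_div l (W x) S) = ereal (avg_renyi P W S l)"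
proof -
  have "renyi_div l (W x) S = ereal (1 / (l - 1) * ln (renyi_sum W S l x))" if x: "0 < P x" for x
  proof -
    have "(\<Sum>y | W x y > 0. W x y powr l * S y powr (1 - l)) = renyi_sum W S l x"
      unfolding renyi_sum_def
      by (rule sum.mono_neutral_left) (use is_channel_nonneg[OF W_channel, of x] in \<open>auto simp: less_le\<close>)
    moreover have "0 < renyi_sum W S l x" by (rule renyi_sum_pos[OF Sp x])
    ultimately show ?thesis unfolding renyi_div_def Let_def using l Sp[OF x] by auto
  qed
  hence "ereal (P x) * renyi_div l (W x) S = ereal (P x * (1 / (l - 1) * ln (renyi_sum W S l x)))" for x
    using P_nonneg[of x] by (cases "0 < P x") (auto simp: zero_ereal_def[symmetric])
  thus ?thesis unfolding avg_renyi_def by (simp add: sum_ereal)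
qed

lemma sum_renyi_div_infinite:
  assumes l: "1 < l" and "0 < P x" "0 < W x y" "S y = 0"
  shows "(\<Sum>x\<in>UNIV. ereal (P x) * renyi_div l (W x) S) = \<infinity>"
proof -
  have "renyi_div l (W x) S = \<infinity>" unfolding renyi_div_def Let_def using assms by auto
  hence "ereal (P x) * renyi_div l (W x) S = \<infinity>" using assms(2) by simp
  moreover have "renyi_div l (W x') S \<noteq> - \<infinity>" for x'
    unfolding renyi_div_def Let_def rel_ent_def by auto
  ultimately show ?thesis unfolding sum_Pinfty using P_nonneg by auto
qed

subsection \<open>Weak duality\<close>

lemma csiszar_mi_ge:
  assumes l: "1 < l" and Q: "Q \<in> abs_cont_channels P W"
  shows "ereal (mutual_info_real P Q - cond_rel_ent P Q W / ((l-1)/l)) \<le> csiszar_mi l P W"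
  unfolding csiszar_mi_def
proof (rule INF_greatest)
  fix S :: "'y \<Rightarrow> real" assume "S \<in> {S. is_dist S}"
  hence S: "is_dist S" by simp
  show "ereal (mutual_info_real P Q - cond_rel_ent P Q W / ((l-1)/l))
    \<le> (\<Sum>x\<in>UNIV. ereal (P x) * renyi_div l (W x) S)"
  proof (cases "\<exists>x y. 0 < P x \<and> 0 < W x y \<and> S y = 0")
    case True
    thus ?thesis using sum_renyi_div_infinite[OF l] by auto
  next
    case False
    have Sp: "0 < S y" if "0 < P x" "0 < W x y" for x y
      using False that is_dist_nonneg[OF S, of y] by (auto simp: less_le)
    define r where "r = (l-1)/l"
    have r: "0 < r" using l by (simp add: r_def)
    have gibbs: "- r * avg_renyi P W S l \<le> cond_rel_ent P Q W - r * cond_rel_ent P Q (\<lambda>x. S)"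
      unfolding r_def by (rule avg_renyi_le_cond_rel_ent_combination[where S=S, OF Q Sp l])
    have "mutual_info_real P Q \<le> cond_rel_ent P Q (\<lambda>x. S)"
    proof (rule mutual_info_real_le_cond_rel_ent_const[OF P_dist abs_cont_channel_is_channel[OF Q] S])
      fix y assume "0 < out_dist P Q y"
      then obtain x where "0 < P x" "0 < Q x y"
        using out_dist_pos_imp_ex[OF P_dist abs_cont_channel_is_channel[OF Q]] by blast
      thus "0 < S y" using Sp abs_cont_channel_supp[OF Q] by blast
    qed
    hence "r * mutual_info_real P Q \<le> r * cond_rel_ent P Q (\<lambda>x. S)" using r by simp
    moreover have "r * (mutual_info_real P Q - cond_rel_ent P Q W / r)
        = r * mutual_info_real P Q - cond_rel_ent P Q W"
      using r by (simp add: algebra_simps)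
    ultimately have "r * (mutual_info_real P Q - cond_rel_ent P Q W / r) \<le> r * avg_renyi P W S l"
      using gibbs by linarith
    hence "mutual_info_real P Q - cond_rel_ent P Q W / r \<le> avg_renyi P W S l" using r by simp
    thus ?thesis
      using sum_renyi_div_eq_avg_renyi[where S=S, OF l Sp] unfolding r_def by simp
  qed
qed

lemma primal_exponent_eq:
  assumes Q: "Q \<in> abs_cont_channels P W"
  shows "primal_exponent P W R Q
    = ereal (cond_rel_ent P Q W + 1/2 * max 0 (R - mutual_info_real P Q))"
proof -
  have Qc: "is_channel Q" using abs_cont_channel_is_channel[OF Q] .
  have "rel_ent (joint P Q) (joint P W) = ereal (cond_rel_ent P Q W)"
    by (rule rel_ent_joint_eq_cond_rel_ent[OF P_dist Qc]) (rule abs_cont_channel_supp[OF Q])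
  thus ?thesis unfolding primal_exponent_def mutual_info_eq_mutual_info_real[OF P_dist Qc]
    by (simp add: zero_ereal_def[symmetric] max_def)
qed

lemma primal_exponent_infinite:
  assumes Qc: "is_channel Q" and "Q \<notin> abs_cont_channels P W"
  shows "primal_exponent P W R Q = \<infinity>"
proof -
  obtain x y where "0 < P x" "W x y = 0" "0 < Q x y"
    using assms is_channel_nonneg[OF Qc] by (auto simp: abs_cont_channels_def less_le)
  hence "rel_ent (joint P Q) (joint P W) = \<infinity>" by (intro rel_ent_joint_infinite)
  thus ?thesis unfolding primal_exponent_def mutual_info_eq_mutual_info_real[OF P_dist Qc]
    by (simp add: zero_ereal_def[symmetric] max_def)
qed

lemma weak_duality:
  assumes Qc: "is_channel Q" and l: "l \<in> {1..2}"
  shows "dual_exponent P W R l \<le> primal_exponent P W R Q"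
proof (cases "Q \<in> abs_cont_channels P W")
  case False
  thus ?thesis using primal_exponent_infinite[OF Qc] by simp
next
  case QK: True
  show ?thesis
  proof (cases "l = 1")
    case True
    thus ?thesis using cond_rel_ent_nonneg[OF QK]
      by (simp add: primal_exponent_eq[OF QK] dual_exponent_def zero_ereal_def[symmetric])
  next
    case False
    hence l1: "1 < l" using l by auto
    define r where "r = (l-1)/l"
    have r: "0 < r" "r \<le> 1/2" using l1 l by (auto simp: r_def field_simps)
    have "r * (R - mutual_info_real P Q) \<le> 1/2 * max 0 (R - mutual_info_real P Q)"
    proof (cases "0 \<le> R - mutual_info_real P Q")
      case True
      thus ?thesis using mult_right_mono[OF r(2) True] by simp
    next
      case False
      thus ?thesis using mult_pos_neg[OF r(1), of "R - mutual_info_real P Q"] by simp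
    qed
    hence le: "r * R - r * mutual_info_real P Q + cond_rel_ent P Q W
        \<le> cond_rel_ent P Q W + 1/2 * max 0 (R - mutual_info_real P Q)"
      by (simp add: algebra_simps)
    have "ereal r * (ereal R - csiszar_mi l P W)
        \<le> ereal r * (ereal R - ereal (mutual_info_real P Q - cond_rel_ent P Q W / r))"
      using csiszar_mi_ge[OF l1 QK] r unfolding r_def
      by (intro ereal_mult_left_mono ereal_minus_mono) auto
    also have "\<dots> = ereal (r * R - r * mutual_info_real P Q + cond_rel_ent P Q W)"
      using r by (simp add: algebra_simps)
    also have "\<dots> \<le> ereal (cond_rel_ent P Q W + 1/2 * max 0 (R - mutual_info_real P Q))"
      using le by simp
    finally show ?thesis unfolding dual_exponent_def primal_exponent_eq[OF QK] r_def .
  qed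
qed

subsection \<open>Strong duality\<close>

lemma lagrangian_eq:
  assumes "Q \<in> abs_cont_channels P W"
  shows "cond_rel_ent P Q W - r * mutual_info_real P Q
    = (1 - r) * neg_cond_entropy P Q - cond_log_lik P W Q + r * neg_out_entropy P Q"
  unfolding cond_rel_ent_eq[OF assms] mutual_info_real_eq[OF P_dist abs_cont_channel_is_channel[OF assms]]
  by (simp add: algebra_simps)

lemma lagrangian_mix_le:
  assumes Q1: "Q1 \<in> abs_cont_channels P W" and Q2: "Q2 \<in> abs_cont_channels P W"
    and s: "0 \<le> s" "s \<le> 1" and r: "0 \<le> r" "r \<le> 1"
  shows "cond_rel_ent P (mix s Q1 Q2) W - r * mutual_info_real P (mix s Q1 Q2)
    \<le> (1-s) * (cond_rel_ent P Q1 W - r * mutual_info_real P Q1)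
      + s * (cond_rel_ent P Q2 W - r * mutual_info_real P Q2)"
proof -
  have Q1c: "is_channel Q1" and Q2c: "is_channel Q2"
    using Q1 Q2 by (simp_all add: abs_cont_channel_is_channel)
  have "(1 - r) * neg_cond_entropy P (mix s Q1 Q2)
      \<le> (1 - r) * ((1-s) * neg_cond_entropy P Q1 + s * neg_cond_entropy P Q2)"
    using neg_cond_entropy_mix_le[OF P_dist Q1c Q2c s] r by (simp add: mult_left_mono)
  moreover have "r * neg_out_entropy P (mix s Q1 Q2)
      \<le> r * ((1-s) * neg_out_entropy P Q1 + s * neg_out_entropy P Q2)"
    using neg_out_entropy_mix_le[OF P_dist Q1c Q2c s] r by (simp add: mult_left_mono)
  ultimately show ?thesis
    unfolding lagrangian_eq[OF Q1] lagrangian_eq[OF Q2]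
      lagrangian_eq[OF mix_mem_abs_cont_channels[OF Q1 Q2 s]] cond_log_lik_mix
    by (simp add: algebra_simps)
qed

text \<open>If the output of a minimiser \<open>Q\<^sub>0\<close> missed a letter \<open>y\<close> reachable under \<open>W\<close>, moving
  towards \<open>W\<close> by \<open>s\<close> would change the Lagrangian by \<open>O(s) + c s ln s\<close> with \<open>c > 0\<close>, which is
  negative for small \<open>s\<close>.\<close>

lemma lagrangian_minimizer_out_dist_pos:
  assumes r: "0 < r" "r \<le> 1" and Q0: "Q0 \<in> abs_cont_channels P W"
    and min: "\<And>Q. Q \<in> abs_cont_channels P W \<Longrightarrow>
      cond_rel_ent P Q0 W - r * mutual_info_real P Q0 \<le> cond_rel_ent P Q W - r * mutual_info_real P Q"
    and x: "0 < P x" "0 < W x y"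
  shows "0 < out_dist P Q0 y"
proof (rule ccontr)
  have Q0c: "is_channel Q0" using abs_cont_channel_is_channel[OF Q0] .
  assume "\<not> 0 < out_dist P Q0 y"
  hence y0: "out_dist P Q0 y = 0" using out_dist_nonneg[OF P_dist Q0c, of y] by simp
  define L where "L Q = cond_rel_ent P Q W - r * mutual_info_real P Q" for Q
  define c where "c = out_dist P W y"
  have c: "0 < c" unfolding c_def by (rule out_dist_pos[OF P_dist W_channel x])
  have key: "0 \<le> L W - L Q0 + r * c * ln s" if s: "0 < s" "s \<le> 1" for s
  proof -
    let ?Qs = "mix s Q0 W"
    have QsK: "?Qs \<in> abs_cont_channels P W"
      using mix_mem_abs_cont_channels[OF Q0 W_mem_abs_cont_channels] s by simp
    have "r * neg_out_entropy P ?Qs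
        \<le> r * ((1-s) * neg_out_entropy P Q0 + s * neg_out_entropy P W + s * ln s * c)"
      using neg_out_entropy_mix_le_at_zero[OF P_dist Q0c W_channel s y0] r
      by (intro mult_left_mono) (auto simp: c_def)
    moreover have "(1 - r) * neg_cond_entropy P ?Qs
        \<le> (1 - r) * ((1-s) * neg_cond_entropy P Q0 + s * neg_cond_entropy P W)"
      using neg_cond_entropy_mix_le[OF P_dist Q0c W_channel] s r by (intro mult_left_mono) auto
    ultimately have "L ?Qs \<le> (1-s) * L Q0 + s * L W + r * (s * ln s * c)"
      unfolding L_def lagrangian_eq[OF Q0] lagrangian_eq[OF W_mem_abs_cont_channels]
        lagrangian_eq[OF QsK] cond_log_lik_mix
      by (simp add: algebra_simps)
    moreover have "L Q0 \<le> L ?Qs" unfolding L_def by (rule min[OF QsK])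
    ultimately have "0 \<le> s * (L W - L Q0 + r * c * ln s)" by (simp add: algebra_simps)
    thus ?thesis using s by (simp add: zero_le_mult_iff)
  qed
  define s where "s = exp (- (\<bar>L W - L Q0\<bar> + 1) / (r * c))"
  have "0 < s" by (simp add: s_def)
  moreover have "s \<le> 1" using r c unfolding s_def by (simp add: divide_nonpos_pos)
  moreover have "r * c * ln s = - (\<bar>L W - L Q0\<bar> + 1)" unfolding s_def using r c by simp
  ultimately show False using key by fastforce
qed

text \<open>The Lagrangian differs from the function \<open>D(Q \<parallel> W | P) - r D(Q \<parallel> S | P)\<close>, which is convex
  along \<open>mix\<close>, by \<open>r D(Q\<^sub>Y \<parallel> S)\<close>, which is at most a chi-square distance.\<close>

lemma lagrangian_mix_le_chi_square:
  assumes Q1: "Q1 \<in> abs_cont_channels P W" and Q2: "Q2 \<in> abs_cont_channels P W"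
    and s: "0 \<le> s" "s \<le> 1" and r: "0 \<le> r" "r \<le> 1"
    and S: "is_dist S" and Sp: "\<And>x y. 0 < P x \<Longrightarrow> 0 < W x y \<Longrightarrow> 0 < S y"
  defines "Q \<equiv> mix s Q1 Q2"
  shows "cond_rel_ent P Q W - r * mutual_info_real P Q
    \<le> (1-s) * (cond_rel_ent P Q1 W - r * cond_rel_ent P Q1 (\<lambda>x. S))
      + s * (cond_rel_ent P Q2 W - r * cond_rel_ent P Q2 (\<lambda>x. S))
      + r * (\<Sum>y\<in>UNIV. (out_dist P Q y - S y)\<^sup>2 / S y)"
proof -
  have QK: "Q \<in> abs_cont_channels P W" unfolding Q_def by (rule mix_mem_abs_cont_channels[OF Q1 Q2 s])
  have Qc: "is_channel Q" and Q1c: "is_channel Q1" and Q2c: "is_channel Q2"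
    using QK Q1 Q2 by (simp_all add: abs_cont_channel_is_channel)
  have SpK: "\<And>x y. 0 < P x \<Longrightarrow> 0 < Q' x y \<Longrightarrow> 0 < S y" if "Q' \<in> abs_cont_channels P W" for Q'
    using Sp abs_cont_channel_supp[OF that] by blast
  have \<Phi>_eq: "cond_rel_ent P Q' W - r * cond_rel_ent P Q' (\<lambda>x. S)
      = (1 - r) * neg_cond_entropy P Q' - cond_log_lik P W Q' + r * out_log_lik P S Q'"
    if "Q' \<in> abs_cont_channels P W" for Q'
  proof -
    have "cond_rel_ent P Q' (\<lambda>x. S) = neg_cond_entropy P Q' - out_log_lik P S Q'"
      by (rule cond_rel_ent_const_eq[OF P_dist abs_cont_channel_is_channel[OF that]]) (rule SpK[OF that])
    thus ?thesis by (simp only: cond_rel_ent_eq[OF that]) (simp add: algebra_simps)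
  qed
  have "(1 - r) * neg_cond_entropy P Q \<le> (1 - r) * ((1-s) * neg_cond_entropy P Q1 + s * neg_cond_entropy P Q2)"
    unfolding Q_def using neg_cond_entropy_mix_le[OF P_dist Q1c Q2c s] r by (intro mult_left_mono) auto
  hence "cond_rel_ent P Q W - r * cond_rel_ent P Q (\<lambda>x. S)
      \<le> (1-s) * (cond_rel_ent P Q1 W - r * cond_rel_ent P Q1 (\<lambda>x. S))
        + s * (cond_rel_ent P Q2 W - r * cond_rel_ent P Q2 (\<lambda>x. S))"
    unfolding \<Phi>_eq[OF QK] \<Phi>_eq[OF Q1] \<Phi>_eq[OF Q2] unfolding Q_def cond_log_lik_mix out_log_lik_mix
    by (simp add: algebra_simps)
  moreover have "neg_out_entropy P Q - out_log_lik P S Q \<le> (\<Sum>y\<in>UNIV. (out_dist P Q y - S y)\<^sup>2 / S y)"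
  proof (rule neg_out_entropy_minus_out_log_lik_le_chi_square[OF P_dist Qc S])
    fix y assume "0 < out_dist P Q y"
    then obtain x where "0 < P x" "0 < Q x y" using out_dist_pos_imp_ex[OF P_dist Qc] by blast
    thus "0 < S y" by (rule SpK[OF QK])
  qed
  hence "r * (neg_out_entropy P Q - out_log_lik P S Q) \<le> r * (\<Sum>y\<in>UNIV. (out_dist P Q y - S y)\<^sup>2 / S y)"
    using r by (simp add: mult_left_mono)
  moreover have "cond_rel_ent P Q W - r * mutual_info_real P Q
      = cond_rel_ent P Q W - r * cond_rel_ent P Q (\<lambda>x. S) + r * (neg_out_entropy P Q - out_log_lik P S Q)"
    unfolding lagrangian_eq[OF QK] \<Phi>_eq[OF QK] by (simp add: algebra_simps)
  ultimately show ?thesis by linarith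
qed

text \<open>Let \<open>S\<close> be the output of a minimiser \<open>Q\<^sub>0\<close> and \<open>T\<close> the channel tilted towards \<open>S\<close>. Along the
  segment from \<open>Q\<^sub>0\<close> to \<open>T\<close> the chi-square term is quadratic in the step, so first-order
  optimality compares \<open>Q\<^sub>0\<close> with \<open>T\<close>, where the Gibbs variational formula is attained.\<close>

lemma lagrangian_minimizer_le_avg_renyi:
  assumes l: "1 < l" and Q0: "Q0 \<in> abs_cont_channels P W"
    and min: "\<And>Q. Q \<in> abs_cont_channels P W \<Longrightarrow> cond_rel_ent P Q0 W - ((l-1)/l) * mutual_info_real P Q0
      \<le> cond_rel_ent P Q W - ((l-1)/l) * mutual_info_real P Q"
  shows "cond_rel_ent P Q0 W - ((l-1)/l) * mutual_info_real P Q0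
    \<le> - ((l-1)/l) * avg_renyi P W (out_dist P Q0) l"
proof -
  define r where "r = (l-1)/l"
  have r: "0 < r" "r \<le> 1" using l by (auto simp: r_def)
  define S where "S = out_dist P Q0"
  have S: "is_dist S" unfolding S_def
    by (rule is_dist_out_dist[OF P_dist abs_cont_channel_is_channel[OF Q0]])
  have Sp: "0 < S y" if "0 < P x" "0 < W x y" for x y
    unfolding S_def by (rule lagrangian_minimizer_out_dist_pos[OF r Q0 min[folded r_def] that])
  define T where "T = tilted P W S l"
  have TK: "T \<in> abs_cont_channels P W" unfolding T_def by (rule tilted_mem_abs_cont_channels[OF Sp])
  define L where "L = cond_rel_ent P Q0 W - r * mutual_info_real P Q0"
  define \<Phi>T where "\<Phi>T = cond_rel_ent P T W - r * cond_rel_ent P T (\<lambda>x. S)"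
  define C where "C = (\<Sum>y\<in>UNIV. (out_dist P T y - S y)\<^sup>2 / S y)"
  have "L - \<Phi>T \<le> s * (r * C)" if s: "0 < s" "s \<le> 1" for s
  proof -
    have "out_dist P (mix s Q0 T) y - S y = s * (out_dist P T y - S y)" for y
      unfolding out_dist_mix S_def by (simp add: algebra_simps)
    hence chi: "(\<Sum>y\<in>UNIV. (out_dist P (mix s Q0 T) y - S y)\<^sup>2 / S y) = s\<^sup>2 * C"
      unfolding C_def by (simp add: power_mult_distrib sum_distrib_left)
    have golden_eq: "mutual_info_real P Q0 = cond_rel_ent P Q0 (\<lambda>x. S)"
      by (simp add: mutual_info_real_def S_def)
    have "L \<le> cond_rel_ent P (mix s Q0 T) W - r * mutual_info_real P (mix s Q0 T)"
      unfolding L_def r_def by (rule min[OF mix_mem_abs_cont_channels[OF Q0 TK]]) (use s in auto)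
    also have "\<dots> \<le> (1-s) * (cond_rel_ent P Q0 W - r * cond_rel_ent P Q0 (\<lambda>x. S)) + s * \<Phi>T
        + r * (\<Sum>y\<in>UNIV. (out_dist P (mix s Q0 T) y - S y)\<^sup>2 / S y)"
      unfolding \<Phi>T_def by (rule lagrangian_mix_le_chi_square[OF Q0 TK _ _ _ _ S Sp]) (use s r in auto)
    also have "\<dots> = (1-s) * L + s * \<Phi>T + r * (s\<^sup>2 * C)"
      using chi golden_eq unfolding L_def by simp
    finally have "s * (L - \<Phi>T) \<le> s * (s * (r * C))" by (simp add: algebra_simps power2_eq_square)
    thus ?thesis using s by simp
  qed
  hence "L \<le> \<Phi>T" using nonpos_if_le_small_multiples[of "L - \<Phi>T" "r * C"] by simp
  also have "\<Phi>T = - r * avg_renyi P W S l"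
    unfolding \<Phi>T_def T_def r_def
    by (rule avg_renyi_eq_cond_rel_ent_combination_tilted[OF is_dist_nonneg[OF S] Sp l])
  finally show ?thesis unfolding L_def r_def S_def .
qed

lemma csiszar_mi_le_at_lagrangian_minimizer:
  assumes l: "1 < l" and Q0: "Q0 \<in> abs_cont_channels P W"
    and min: "\<And>Q. Q \<in> abs_cont_channels P W \<Longrightarrow> cond_rel_ent P Q0 W - ((l-1)/l) * mutual_info_real P Q0
      \<le> cond_rel_ent P Q W - ((l-1)/l) * mutual_info_real P Q"
  shows "csiszar_mi l P W \<le> ereal (mutual_info_real P Q0 - cond_rel_ent P Q0 W / ((l-1)/l))"
proof -
  define S where "S = out_dist P Q0"
  have S: "is_dist S" unfolding S_def
    by (rule is_dist_out_dist[OF P_dist abs_cont_channel_is_channel[OF Q0]])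
  have r: "0 < (l-1)/l" "(l-1)/l \<le> 1" using l by auto
  have "csiszar_mi l P W \<le> (\<Sum>x\<in>UNIV. ereal (P x) * renyi_div l (W x) S)"
    unfolding csiszar_mi_def by (rule INF_lower) (use S in simp)
  also have "\<dots> = ereal (avg_renyi P W S l)"
    by (rule sum_renyi_div_eq_avg_renyi[OF l])
      (unfold S_def, rule lagrangian_minimizer_out_dist_pos[OF r Q0 min])
  also have "\<dots> \<le> ereal (mutual_info_real P Q0 - cond_rel_ent P Q0 W / ((l-1)/l))"
  proof -
    have "(l-1)/l * avg_renyi P W S l \<le> (l-1)/l * mutual_info_real P Q0 - cond_rel_ent P Q0 W"
      using lagrangian_minimizer_le_avg_renyi[OF l Q0 min] unfolding S_def by simp
    also have "\<dots> = (l-1)/l * (mutual_info_real P Q0 - cond_rel_ent P Q0 W / ((l-1)/l))"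
      by (rule mult_diff_divide_cancel[symmetric]) (use l in simp)
    finally have "(l-1)/l * avg_renyi P W S l
        \<le> (l-1)/l * (mutual_info_real P Q0 - cond_rel_ent P Q0 W / ((l-1)/l))" .
    thus ?thesis using r by (subst ereal_less_eq(3)) (rule mult_left_le_imp_le)
  qed
  finally show ?thesis .
qed

lemma continuous_on_cond_rel_ent: "continuous_on (abs_cont_channels P W) (\<lambda>Q. cond_rel_ent P Q W)"
proof (rule continuous_on_cong[THEN iffD2, OF refl])
  show "cond_rel_ent P Q W = neg_cond_entropy P Q - cond_log_lik P W Q"
    if "Q \<in> abs_cont_channels P W" for Q using cond_rel_ent_eq[OF that] .
  show "continuous_on (abs_cont_channels P W) (\<lambda>Q. neg_cond_entropy P Q - cond_log_lik P W Q)"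
    unfolding neg_cond_entropy_def cond_log_lik_def
    by (intro continuous_on_diff continuous_on_sum continuous_on_mult continuous_on_const
        continuous_on_coordinate continuous_on_compose2[OF continuous_on_xlnx continuous_on_coordinate])
      (auto dest!: abs_cont_channel_is_channel intro: is_channel_nonneg is_channel_le_1)
qed

lemma continuous_on_mutual_info_real:
  "continuous_on (abs_cont_channels P W) (\<lambda>Q. mutual_info_real P Q)"
proof (rule continuous_on_cong[THEN iffD2, OF refl])
  show "mutual_info_real P Q = neg_cond_entropy P Q - neg_out_entropy P Q"
    if "Q \<in> abs_cont_channels P W" for Q
    using mutual_info_real_eq[OF P_dist abs_cont_channel_is_channel[OF that]] .
  have "continuous_on (abs_cont_channels P W) (\<lambda>Q. out_dist P Q y)" for y
    unfolding out_dist_def by (intro continuous_on_sum continuous_on_mult continuous_on_const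
        continuous_on_coordinate)
  thus "continuous_on (abs_cont_channels P W) (\<lambda>Q. neg_cond_entropy P Q - neg_out_entropy P Q)"
    unfolding neg_cond_entropy_def neg_out_entropy_def
    by (intro continuous_on_diff continuous_on_sum continuous_on_mult continuous_on_const
        continuous_on_compose2[OF continuous_on_xlnx continuous_on_coordinate]
        continuous_on_compose2[OF continuous_on_xlnx])
      (auto dest!: abs_cont_channel_is_channel intro: is_channel_nonneg is_channel_le_1
        out_dist_nonneg[OF P_dist] out_dist_le_1[OF P_dist])
qed

text \<open>On \<open>abs_cont_channels P W\<close> the primal objective is the maximum of the two convex functions
  \<open>D(Q \<parallel> W | P)\<close> and \<open>D(Q \<parallel> W | P) + (R - I(P,Q))/2\<close>; its minimiser is therefore a minimiser of a
  convex combination of the two.\<close>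

lemma exists_primal_minimizer_lagrangian:
  obtains Q0 t where "Q0 \<in> abs_cont_channels P W" "t \<in> {0..1}"
    and "\<And>Q. Q \<in> abs_cont_channels P W \<Longrightarrow> cond_rel_ent P Q0 W + 1/2 * max 0 (R - mutual_info_real P Q0)
      \<le> cond_rel_ent P Q W + t/2 * (R - mutual_info_real P Q)"
    and "cond_rel_ent P Q0 W + t/2 * (R - mutual_info_real P Q0)
      \<le> cond_rel_ent P Q0 W + 1/2 * max 0 (R - mutual_info_real P Q0)"
proof -
  let ?K = "abs_cont_channels P W"
  define A where "A Q = cond_rel_ent P Q W" for Q
  define B where "B Q = cond_rel_ent P Q W + 1/2 * (R - mutual_info_real P Q)" for Q
  have max_eq: "max (A Q) (B Q) = cond_rel_ent P Q W + 1/2 * max 0 (R - mutual_info_real P Q)" for Q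
    by (simp add: A_def B_def max_def)
  have "continuous_on ?K (\<lambda>Q. max (A Q) (B Q))" unfolding A_def B_def
    by (intro continuous_intros continuous_on_cond_rel_ent continuous_on_mutual_info_real)
  then obtain Q0 where Q0: "Q0 \<in> ?K" and min: "\<forall>Q\<in>?K. max (A Q0) (B Q0) \<le> max (A Q) (B Q)"
    using continuous_attains_inf[OF compact_abs_cont_channels] W_mem_abs_cont_channels by blast
  have "convex {z::real \<times> real. \<exists>Q\<in>?K. A Q \<le> fst z \<and> B Q \<le> snd z}"
  proof (rule convex_dominated_set_if_mix_convex[where mx = mix])
    fix Q1 Q2 s assume hyps: "Q1 \<in> ?K" "Q2 \<in> ?K" "0 \<le> (s::real)" "s \<le> 1"
    have B_eq: "B Q = cond_rel_ent P Q W - 1/2 * mutual_info_real P Q + R/2" for Q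
      by (simp add: B_def field_simps)
    have "B (mix s Q1 Q2) \<le> (1-s) * B Q1 + s * B Q2"
      unfolding B_eq using lagrangian_mix_le[OF hyps, of "1/2"] by (simp add: field_simps)
    thus "mix s Q1 Q2 \<in> ?K \<and> A (mix s Q1 Q2) \<le> (1-s) * A Q1 + s * A Q2
        \<and> B (mix s Q1 Q2) \<le> (1-s) * B Q1 + s * B Q2"
      using mix_mem_abs_cont_channels[OF hyps] lagrangian_mix_le[OF hyps, of 0] by (simp add: A_def)
  qed
  then obtain t where t: "t \<in> {0..1}"
    and sep: "\<And>Q. Q \<in> ?K \<Longrightarrow> max (A Q0) (B Q0) \<le> (1-t) * A Q + t * B Q"
    using convex_comb_ge_if_max_ge[of ?K A B "max (A Q0) (B Q0)"] Q0 min by blast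
  have comb_eq: "(1-t) * A Q + t * B Q = cond_rel_ent P Q W + t/2 * (R - mutual_info_real P Q)" for Q
    by (simp add: A_def B_def algebra_simps)
  show ?thesis
  proof (rule that[OF Q0 t])
    show "cond_rel_ent P Q0 W + 1/2 * max 0 (R - mutual_info_real P Q0)
        \<le> cond_rel_ent P Q W + t/2 * (R - mutual_info_real P Q)" if "Q \<in> ?K" for Q
      using sep[OF that] comb_eq[of Q] max_eq[of Q0] by linarith
    show "cond_rel_ent P Q0 W + t/2 * (R - mutual_info_real P Q0)
        \<le> cond_rel_ent P Q0 W + 1/2 * max 0 (R - mutual_info_real P Q0)"
      using convex_bound_le[of "A Q0" "max (A Q0) (B Q0)" "B Q0" "1-t" t] t comb_eq[of Q0] max_eq[of Q0]
      by simp
  qed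
qed

lemma strong_duality:
  obtains Q0 l0 where "Q0 \<in> abs_cont_channels P W" "l0 \<in> {1..2}"
    and "primal_exponent P W R Q0 \<le> dual_exponent P W R l0"
proof -
  obtain Q0 t where Q0: "Q0 \<in> abs_cont_channels P W" and t: "t \<in> {0..1}"
    and upper: "\<And>Q. Q \<in> abs_cont_channels P W \<Longrightarrow> cond_rel_ent P Q0 W + 1/2 * max 0 (R - mutual_info_real P Q0)
      \<le> cond_rel_ent P Q W + t/2 * (R - mutual_info_real P Q)"
    and lower: "cond_rel_ent P Q0 W + t/2 * (R - mutual_info_real P Q0)
      \<le> cond_rel_ent P Q0 W + 1/2 * max 0 (R - mutual_info_real P Q0)"
    using exists_primal_minimizer_lagrangian[where R=R] by blast
  define v where "v = cond_rel_ent P Q0 W + 1/2 * max 0 (R - mutual_info_real P Q0)"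
  have primal: "primal_exponent P W R Q0 = ereal v"
    unfolding v_def by (rule primal_exponent_eq[OF Q0])
  show ?thesis
  proof (cases "t = 0")
    case True
    have "v \<le> 0" using upper[OF W_mem_abs_cont_channels] True cond_rel_ent_self by (simp add: v_def)
    thus ?thesis using that[OF Q0, of 1] by (simp add: primal dual_exponent_def zero_ereal_def[symmetric])
  next
    case False
    hence t: "0 < t" "t \<le> 1" using t by auto
    define l where "l = 2 / (2 - t)"
    have l: "1 < l" "l \<le> 2" using t by (auto simp: l_def field_simps)
    have rl: "(l-1)/l = t/2" using t unfolding l_def by (simp add: field_simps)
    have min: "cond_rel_ent P Q0 W - (l-1)/l * mutual_info_real P Q0
        \<le> cond_rel_ent P Q W - (l-1)/l * mutual_info_real P Q" if "Q \<in> abs_cont_channels P W" for Q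
      using upper[OF that] lower unfolding rl right_diff_distrib by linarith
    have "t/2 * (R - (mutual_info_real P Q0 - cond_rel_ent P Q0 W / (t/2)))
        = cond_rel_ent P Q0 W + t/2 * (R - mutual_info_real P Q0)"
      using t by (simp add: field_simps)
    hence "v \<le> t/2 * (R - (mutual_info_real P Q0 - cond_rel_ent P Q0 W / (t/2)))"
      using upper[OF Q0] unfolding v_def by linarith
    hence "ereal v \<le> ereal (t/2) * (ereal R - ereal (mutual_info_real P Q0 - cond_rel_ent P Q0 W / (t/2)))"
      by simp
    also have "\<dots> \<le> ereal (t/2) * (ereal R - csiszar_mi l P W)"
      using csiszar_mi_le_at_lagrangian_minimizer[OF l(1) Q0 min] t unfolding rl
      by (intro ereal_mult_left_mono ereal_minus_mono) auto
    finally show ?thesis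
      using that[OF Q0, of l] l by (simp add: primal dual_exponent_def rl)
  qed
qed

end

theorem proposition2:
  fixes P :: "'x::finite \<Rightarrow> real" and W :: "'x \<Rightarrow> 'y::finite \<Rightarrow> real"
    and m :: nat and R :: real
  assumes "m > 0" and "is_mtype m P" and "is_channel W"
    and "ereal R > mutual_info P W"
  shows "\<exists>Q0 l0. is_channel Q0 \<and> l0 \<in> {1..2} \<and>
    (let f = (\<lambda>Q. rel_ent (joint P Q) (joint P W)
                 + ereal (1/2) * max 0 (ereal R - rel_ent (joint P Q) (prod_dist P (out_dist P Q))));
         g = (\<lambda>l. ereal ((l - 1) / l) * (ereal R - csiszar_mi l P W))
     in f Q0 = g l0 \<and> (\<forall>Q. is_channel Q \<longrightarrow> f Q0 \<le> f Q)
        \<and> (\<forall>l\<in>{1..2}. g l \<le> g l0))"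
proof -
  interpret source_channel P W
    using assms(2,3) by unfold_locales (simp_all add: is_mtype_def)
  obtain Q0 l0 where Q0: "Q0 \<in> abs_cont_channels P W" and l0: "l0 \<in> {1..2}"
    and le: "primal_exponent P W R Q0 \<le> dual_exponent P W R l0"
    using strong_duality[where R=R] by blast
  have Q0c: "is_channel Q0" using abs_cont_channel_is_channel[OF Q0] .
  have eq: "primal_exponent P W R Q0 = dual_exponent P W R l0"
    using le weak_duality[OF Q0c l0] by (rule antisym)
  show ?thesis
    unfolding Let_def primal_exponent_def[symmetric] dual_exponent_def[symmetric]
    using Q0c l0 eq weak_duality by metis
qed

end
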